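(* Fix $\alpha\in(0,1)$ and a transient MDP with a sink state as in the context. There exists a stationary deterministic policy $\pi^\star\in\Pi_{\mathrm{SD}}$ that attains the supremum in \[ \sup_{\pi\in\Pi_{\mathrm{HR}}}\liminf_{t\to\infty}\mathrm{EVaR}^{\pi,\mu}_\alpha\Big[\sum_{k=0}^t r(\tilde s_k,\tilde a_k,\tilde s_{k+1})\Big]. \]
   Context: MDP: states $\bar{\mathcal S}=\{1,\dots,S,S+1\}$, $e:=S+1$ a sink state, $\mathcal S=\{1,\dots,S\}$; finite actions; transitions $p(s,a,s')$, real rewards $r(s,a,s')$ of arbitrary sign; $p(e,a,e)=1$, $r(e,a,e)=0$; initial distribution $\mu$ on $\mathcal S$ with $\mu>0$; superscript $\pi,\mu$ indicates the process starts from $\tilde s_0\sim\mu$ and actions follow $\pi$. $\Pi_{\mathrm{HR}}$: history-dependent randomized policies; $\Pi_{\mathrm{SD}}$: stationary deterministic policies. Transience: for every $\pi\in\Pi_{\mathrm{SD}}$, $\sum_{t\ge0}\mathbb P^{\pi,s}[\tilde s_t=s']<\infty$ for all $s,s'\in\mathcal S$. $\mathrm{EVaR}_\alpha[\tilde x]=\sup_{\beta>0}\big(-\beta^{-1}\log\mathbb E[e^{-\beta\tilde x}]+\beta^{-1}\log\alpha\big)$. *)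

theory Defs
  imports "HOL-Probability.Probability"
begin

text \<open>
  MDP with states 1..S (transient states) and the sink state e = S+1.
  Actions form a finite type 'a. Transition kernel K s a is a pmf on states,
  so p(s,a,s') = pmf (K s a) s'.
  A history-dependent randomized policy maps the past history
  [(s_0,a_0),...,(s_{t-1},a_{t-1})] together with the current state s_t
  to a distribution over actions.
\<close>

type_synonym 'a hist = "(nat \<times> 'a) list"
type_synonym 'a policy = "'a hist \<Rightarrow> nat \<Rightarrow> 'a pmf"

definition sd_policy :: "(nat \<Rightarrow> 'a) \<Rightarrow> 'a policy" where
  "sd_policy d = (\<lambda>h s. return_pmf (d s))"

fun traj :: "(nat \<Rightarrow> 'a \<Rightarrow> nat pmf) \<Rightarrow> 'a policy \<Rightarrow> nat pmf \<Rightarrow> nat \<Rightarrow> ('a hist \<times> nat) pmf" where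
  "traj K \<pi> mu 0 = map_pmf (\<lambda>s. ([], s)) mu"
| "traj K \<pi> mu (Suc n) =
     bind_pmf (traj K \<pi> mu n) (\<lambda>(h, s).
       bind_pmf (\<pi> h s) (\<lambda>a. map_pmf (\<lambda>s'. (h @ [(s, a)], s')) (K s a)))"

definition traj_return :: "(nat \<Rightarrow> 'a \<Rightarrow> nat \<Rightarrow> real) \<Rightarrow> 'a hist \<times> nat \<Rightarrow> real" where
  "traj_return r hs = (let h = fst hs; sts = map fst h @ [snd hs] in
      (\<Sum>k<length h. r (fst (h ! k)) (snd (h ! k)) (sts ! Suc k)))"

text \<open>Distribution of the return sum_{k=0}^t r(s_k,a_k,s_{k+1}).\<close>
definition return_dist :: "(nat \<Rightarrow> 'a \<Rightarrow> nat pmf) \<Rightarrow> (nat \<Rightarrow> 'a \<Rightarrow> nat \<Rightarrow> real)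
    \<Rightarrow> 'a policy \<Rightarrow> nat pmf \<Rightarrow> nat \<Rightarrow> real pmf" where
  "return_dist K r \<pi> mu t = map_pmf (traj_return r) (traj K \<pi> mu (Suc t))"

definition EVaR :: "real \<Rightarrow> real pmf \<Rightarrow> real" where
  "EVaR \<alpha> D = (SUP \<beta>\<in>{0<..}.
      - ln (measure_pmf.expectation D (\<lambda>x. exp (- \<beta> * x))) / \<beta> + ln \<alpha> / \<beta>)"

definition sink_mdp :: "nat \<Rightarrow> (nat \<Rightarrow> 'a \<Rightarrow> nat pmf) \<Rightarrow> (nat \<Rightarrow> 'a \<Rightarrow> nat \<Rightarrow> real) \<Rightarrow> bool" where
  "sink_mdp S K r \<longleftrightarrow>
     (\<forall>s\<in>{1..S+1}. \<forall>a. set_pmf (K s a) \<subseteq> {1..S+1}) \<and>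
     (\<forall>a. K (S+1) a = return_pmf (S+1)) \<and>
     (\<forall>a. r (S+1) a (S+1) = 0)"

definition transient :: "nat \<Rightarrow> (nat \<Rightarrow> 'a \<Rightarrow> nat pmf) \<Rightarrow> bool" where
  "transient S K \<longleftrightarrow>
     (\<forall>d :: nat \<Rightarrow> 'a. \<forall>s\<in>{1..S}. \<forall>s'\<in>{1..S}.
        summable (\<lambda>t. measure_pmf.prob (traj K (sd_policy d) (return_pmf s) t) {hs. snd hs = s'}))"

end

theory Submission
  imports Defs
begin

text \<open>
  For fixed \<beta> > 0, E[exp(-\<beta> R_t)] is minimised by exponential-utility value iteration. Started
  from the indicator of the sink, the iterates increase to a supersolution z of the exponential
  Bellman equation (sink_val_lim), and the stationary policy that is greedy for z keeps
  E[exp(-\<beta> R_t)] below E_\<mu> z + o(1): by transience, every policy reaches the sink within S steps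
  with probability bounded away from 0. So under the greedy policy the liminf of EVaR is at least
  the EVaR objective at E_\<mu> z, while for any policy the same iterates bound the objective at \<beta>
  from above. Small \<beta> are handled by a bound on the reward collected before absorption, the
  remaining ones by a finite grid of \<beta>. As the greedy policies range over the finitely many
  decision rules on the states, the best of them is optimal.
\<close>

lemma expectation_pmf_eq_sum:
  fixes f :: "'b \<Rightarrow> real"
  assumes "finite A" "set_pmf p \<subseteq> A"
  shows "measure_pmf.expectation p f = (\<Sum>x\<in>A. pmf p x * f x)"
  using integral_measure_pmf[OF assms(1), of p f] assms(2) by auto

lemma expectation_pmf_cong:
  fixes f g :: "'b \<Rightarrow> real"
  assumes "\<And>x. x \<in> set_pmf p \<Longrightarrow> f x = g x"
  shows "measure_pmf.expectation p f = measure_pmf.expectation p g"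
  by (rule integral_cong_AE) (auto simp: AE_measure_pmf_iff assms)

lemma expectation_pmf_mono:
  fixes f g :: "'b \<Rightarrow> real"
  assumes "finite (set_pmf p)" "\<And>x. x \<in> set_pmf p \<Longrightarrow> f x \<le> g x"
  shows "measure_pmf.expectation p f \<le> measure_pmf.expectation p g"
  using assms by (simp add: expectation_pmf_eq_sum[OF assms(1) order.refl] sum_mono mult_left_mono)

lemma expectation_bind_pmf_finite:
  fixes h :: "'c \<Rightarrow> real"
  assumes "finite (set_pmf p)" "\<And>x. x \<in> set_pmf p \<Longrightarrow> finite (set_pmf (f x))"
  shows "measure_pmf.expectation (p \<bind> f) h
       = measure_pmf.expectation p (\<lambda>x. measure_pmf.expectation (f x) h)"
  using pmf_expectation_bind[OF assms(1) assms(2) order.refl, where h=h]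
  by (simp add: expectation_pmf_eq_sum[OF assms(1) order.refl])

lemma expectation_exp_pos:
  fixes D :: "'b pmf" and f :: "'b \<Rightarrow> real"
  assumes "finite (set_pmf D)"
  shows "0 < measure_pmf.expectation D (\<lambda>x. exp (f x))"
proof -
  obtain x where x: "x \<in> set_pmf D" using set_pmf_not_empty[of D] by blast
  have "0 < pmf D x * exp (f x)" using x by (simp add: pmf_positive)
  also have "\<dots> \<le> (\<Sum>y\<in>set_pmf D. pmf D y * exp (f y))"
    by (rule member_le_sum) (simp_all add: x assms)
  finally show ?thesis by (simp add: expectation_pmf_eq_sum[OF assms order.refl])
qed

lemma exp_sum_le_sum_exp:
  fixes p y :: "'b \<Rightarrow> real"
  assumes "finite A" "A \<noteq> {}" "\<And>x. x \<in> A \<Longrightarrow> 0 \<le> p x" "(\<Sum>x\<in>A. p x) = 1"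
  shows "exp (\<Sum>x\<in>A. p x * y x) \<le> (\<Sum>x\<in>A. p x * exp (y x))"
  using convex_on_sum[OF assms(1,2) exp_convex assms(4) assms(3)] by simp

text \<open>Lyapunov's inequality, via the tangent of exp at ln E[exp Y].\<close>
lemma expectation_exp_scale_le:
  fixes D :: "'b pmf" and y :: "'b \<Rightarrow> real"
  assumes fin: "finite (set_pmf D)" and "0 \<le> \<theta>" "\<theta> \<le> 1"
  shows "measure_pmf.expectation D (\<lambda>x. exp (\<theta> * y x))
       \<le> exp (\<theta> * ln (measure_pmf.expectation D (\<lambda>x. exp (y x))))"
proof -
  define m where "m = measure_pmf.expectation D (\<lambda>x. exp (y x))"
  have m: "0 < m" unfolding m_def by (rule expectation_exp_pos[OF fin])
  have pointwise: "exp (\<theta> * y x) \<le> exp (\<theta> * ln m) * ((1 - \<theta>) + \<theta> / m * exp (y x))" for x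
  proof -
    have "exp (\<theta> * y x) = exp (\<theta> * ln m) * exp ((1 - \<theta>) * 0 + \<theta> * (y x - ln m))"
      by (simp add: algebra_simps flip: exp_add)
    also have "\<dots> \<le> exp (\<theta> * ln m) * ((1 - \<theta>) * exp 0 + \<theta> * exp (y x - ln m))"
      using convex_onD[OF exp_convex, of \<theta> 0 "y x - ln m"] assms(2,3) by simp
    also have "exp (y x - ln m) = exp (y x) / m" using m by (simp add: exp_diff)
    finally show ?thesis by simp
  qed
  have "measure_pmf.expectation D (\<lambda>x. exp (\<theta> * y x))
      \<le> measure_pmf.expectation D (\<lambda>x. exp (\<theta> * ln m) * ((1 - \<theta>) + \<theta> / m * exp (y x)))"
    by (rule expectation_pmf_mono[OF fin pointwise])
  also have "\<dots> = (\<Sum>x\<in>set_pmf D. exp (\<theta> * ln m) * (1 - \<theta>) * pmf D x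
      + exp (\<theta> * ln m) * (\<theta> / m) * (pmf D x * exp (y x)))"
    by (simp add: expectation_pmf_eq_sum[OF fin order.refl] algebra_simps)
  also have "\<dots> = exp (\<theta> * ln m) * (1 - \<theta>) * (\<Sum>x\<in>set_pmf D. pmf D x)
      + exp (\<theta> * ln m) * (\<theta> / m) * (\<Sum>x\<in>set_pmf D. pmf D x * exp (y x))"
    by (simp add: sum.distrib sum_distrib_left)
  also have "\<dots> = exp (\<theta> * ln m) * ((1 - \<theta>) + \<theta> / m * m)"
    by (simp add: m_def expectation_pmf_eq_sum[OF fin order.refl] sum_pmf_eq_1[OF fin order.refl]
        algebra_simps)
  also have "\<dots> = exp (\<theta> * ln m)" using m by simp
  finally show ?thesis unfolding m_def .
qed

lemma neg_ln_laplace_div_antimono: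
  fixes D :: "real pmf"
  assumes fin: "finite (set_pmf D)" and "0 < \<beta>" "\<beta> \<le> \<beta>'"
  shows "- ln (measure_pmf.expectation D (\<lambda>x. exp (- \<beta>' * x))) / \<beta>'
       \<le> - ln (measure_pmf.expectation D (\<lambda>x. exp (- \<beta> * x))) / \<beta>"
proof -
  define \<theta> where "\<theta> = \<beta> / \<beta>'"
  have \<theta>: "0 \<le> \<theta>" "\<theta> \<le> 1" unfolding \<theta>_def using assms(2,3) by auto
  have "measure_pmf.expectation D (\<lambda>x. exp (- \<beta> * x))
      = measure_pmf.expectation D (\<lambda>x. exp (\<theta> * (- \<beta>' * x)))"
    unfolding \<theta>_def using assms(2,3) by simp
  also have "\<dots> \<le> exp (\<theta> * ln (measure_pmf.expectation D (\<lambda>x. exp (- \<beta>' * x))))"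
    by (rule expectation_exp_scale_le[OF fin \<theta>])
  finally have "ln (measure_pmf.expectation D (\<lambda>x. exp (- \<beta> * x)))
      \<le> \<theta> * ln (measure_pmf.expectation D (\<lambda>x. exp (- \<beta>' * x)))"
    using expectation_exp_pos[OF fin, of "\<lambda>x. - \<beta> * x"] by (metis ln_exp ln_le_cancel_iff exp_gt_zero)
  then show ?thesis unfolding \<theta>_def using assms(2,3) by (simp add: field_simps)
qed

lemma funpow_mono_on:
  fixes F :: "('b \<Rightarrow> real) \<Rightarrow> 'b \<Rightarrow> real"
  assumes F: "\<And>w w' s. (\<And>s. s \<in> A \<Longrightarrow> w s \<le> w' s) \<Longrightarrow> F w s \<le> F w' s"
    and le: "\<And>s. s \<in> A \<Longrightarrow> w s \<le> w' s" and "s \<in> A"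
  shows "(F ^^ n) w s \<le> (F ^^ n) w' s"
  using \<open>s \<in> A\<close> by (induction n arbitrary: s) (simp_all add: le F)

lemma Min_range_attained:
  fixes f :: "'a::finite \<Rightarrow> 'b::linorder"
  obtains a where "Min (range f) = f a"
proof -
  have "Min (range f) \<in> range f" by (rule Min_in) simp_all
  then show thesis using that by blast
qed

lemma Max_range_attained:
  fixes f :: "'a::finite \<Rightarrow> 'b::linorder"
  obtains a where "Max (range f) = f a"
proof -
  have "Max (range f) \<in> range f" by (rule Max_in) simp_all
  then show thesis using that by blast
qed

lemma traj_return_Nil: "traj_return r ([], s) = 0"
  by (simp add: traj_return_def)

lemma traj_return_snoc: "traj_return r (h @ [(s, a)], s') = traj_return r (h, s) + r s a s'"
proof -
  have "(map fst (h @ [(s, a)]) @ [s']) ! Suc k = (map fst h @ [s]) ! Suc k" if "k < length h" for k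
    using that by (cases "Suc k < length h") (auto simp: nth_append)
  then show ?thesis
    by (simp add: traj_return_def nth_append)
qed

lemma real_grid_bracket:
  fixes x \<eta> :: real
  assumes "0 < \<eta>" "0 \<le> x" "x < real N * \<eta>"
  obtains i where "i \<in> {1..N}" "(real i - 1) * \<eta> \<le> x" "x < real i * \<eta>"
proof
  define i where "i = nat \<lfloor>x / \<eta>\<rfloor> + 1"
  have fl: "real (nat \<lfloor>x / \<eta>\<rfloor>) = of_int \<lfloor>x / \<eta>\<rfloor>"
    using assms by simp
  show "(real i - 1) * \<eta> \<le> x"
    unfolding i_def using of_int_floor_le[of "x / \<eta>"] fl assms(1) by (simp add: le_divide_eq)
  show "x < real i * \<eta>"
    unfolding i_def using real_of_int_floor_add_one_gt[of "x / \<eta>"] fl assms(1)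
    by (simp add: divide_less_eq algebra_simps)
  have "x / \<eta> < real N" using assms by (simp add: divide_less_eq)
  then have "\<lfloor>x / \<eta>\<rfloor> < int N" by (simp add: floor_less_iff)
  moreover have "0 \<le> \<lfloor>x / \<eta>\<rfloor>" using assms(1,2) by simp
  ultimately show "i \<in> {1..N}" unfolding i_def by (simp add: nat_less_iff Suc_le_eq)
qed

lemma decseq_finite_sets_stationary:
  fixes A :: "nat \<Rightarrow> 'b set"
  assumes "decseq A" "finite (A 0)" "card (A 0) \<le> N" "A N \<noteq> {}"
  shows "\<exists>n<N. A (Suc n) = A n"
proof (rule ccontr)
  assume "\<not> (\<exists>n<N. A (Suc n) = A n)"
  then have strict: "A (Suc n) \<subset> A n" if "n < N" for n
    using that \<open>decseq A\<close> by (auto simp: decseq_Suc_iff)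
  have fin: "finite (A n)" for n
    using \<open>decseq A\<close> \<open>finite (A 0)\<close> finite_subset by (metis decseq_def zero_le)
  have "card (A n) + n \<le> N" if "n \<le> N" for n
    using that
  proof (induction n)
    case (Suc n)
    then show ?case using psubset_card_mono[OF fin strict[of n]] by simp
  qed (use assms(3) in simp)
  then have "card (A N) = 0" by fastforce
  then show False using fin assms(4) by simp
qed

section \<open>Exponential-utility dynamic programming\<close>

locale transient_sink_mdp =
  fixes S :: nat and K :: "nat \<Rightarrow> 'a::finite \<Rightarrow> nat pmf" and r :: "nat \<Rightarrow> 'a \<Rightarrow> nat \<Rightarrow> real"
    and \<mu> :: "nat pmf" and \<alpha> :: real
  assumes alpha_pos: "0 < \<alpha>" and alpha_less_1: "\<alpha> < 1"
    and sink_mdp: "sink_mdp S K r" and transient: "transient S K"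
    and set_pmf_\<mu>: "set_pmf \<mu> = {1..S}"
begin

declare sum.cl_ivl_Suc [simp del]

abbreviation sink :: nat where "sink \<equiv> Suc S"
abbreviation states :: "nat set" where "states \<equiv> {Suc 0..sink}"
abbreviation tstates :: "nat set" where "tstates \<equiv> {Suc 0..S}"

lemma set_pmf_K: "s \<in> states \<Longrightarrow> set_pmf (K s a) \<subseteq> states"
  using sink_mdp unfolding sink_mdp_def by simp

lemma K_sink: "K sink a = return_pmf sink"
  using sink_mdp unfolding sink_mdp_def by simp

lemma r_sink: "r sink a sink = 0"
  using sink_mdp unfolding sink_mdp_def by simp

lemma finite_set_pmf_K: "s \<in> states \<Longrightarrow> finite (set_pmf (K s a))"
  using set_pmf_K finite_subset by blast

lemma sum_pmf_K: "s \<in> states \<Longrightarrow> (\<Sum>s'\<in>states. pmf (K s a) s') = 1"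
  by (rule sum_pmf_eq_1[OF _ set_pmf_K]) simp_all

lemma sum_pmf_K_sink: "(\<Sum>s'\<in>states. pmf (K sink a) s' * g s') = g sink"
proof -
  have "(\<Sum>s'\<in>states. pmf (K sink a) s' * g s') = (\<Sum>s'\<in>states. if s' = sink then g s' else 0)"
    by (rule sum.cong) (auto simp: K_sink pmf_return)
  then show ?thesis by simp
qed

lemma tstates_nonempty: "tstates \<noteq> {}"
  using set_pmf_\<mu> set_pmf_not_empty by (metis One_nat_def)

lemma pmf_\<mu>_pos: "s \<in> tstates \<Longrightarrow> 0 < pmf \<mu> s"
  using set_pmf_\<mu> pmf_positive by (metis One_nat_def)

lemma set_pmf_traj:
  assumes "set_pmf \<nu> \<subseteq> states"
  shows "finite (set_pmf (traj K \<pi> \<nu> n)) \<and> (\<forall>hs\<in>set_pmf (traj K \<pi> \<nu> n). snd hs \<in> states)"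
proof (induction n)
  case 0
  then show ?case using assms finite_subset by auto
next
  case (Suc n)
  have "set_pmf (traj K \<pi> \<nu> (Suc n)) \<subseteq> (\<Union>(h, s)\<in>set_pmf (traj K \<pi> \<nu> n). \<Union>a\<in>set_pmf (\<pi> h s).
      (\<lambda>s'. (h @ [(s, a)], s')) ` set_pmf (K s a))"
    by (auto simp: set_bind_pmf)
  moreover have "finite (\<Union>(h, s)\<in>set_pmf (traj K \<pi> \<nu> n). \<Union>a\<in>set_pmf (\<pi> h s).
      (\<lambda>s'. (h @ [(s, a)], s')) ` set_pmf (K s a))"
    using Suc by (auto intro!: finite_UN_I finite_imageI finite_set_pmf_K)
  ultimately show ?case
    using Suc set_pmf_K finite_subset by fastforce
qed

definition qval :: "real \<Rightarrow> (nat \<Rightarrow> real) \<Rightarrow> nat \<Rightarrow> 'a \<Rightarrow> real" where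
  "qval \<beta> w s a = (\<Sum>s'\<in>states. pmf (K s a) s' * exp (- \<beta> * r s a s') * w s')"

definition bellman :: "real \<Rightarrow> (nat \<Rightarrow> real) \<Rightarrow> nat \<Rightarrow> real" where
  "bellman \<beta> w s = Min (range (qval \<beta> w s))"

definition bellman_dr :: "real \<Rightarrow> (nat \<Rightarrow> 'a) \<Rightarrow> (nat \<Rightarrow> real) \<Rightarrow> nat \<Rightarrow> real" where
  "bellman_dr \<beta> d w s = qval \<beta> w s (d s)"

lemma bellman_le_qval: "bellman \<beta> w s \<le> qval \<beta> w s a"
  unfolding bellman_def by (rule Min_le) simp_all

lemma bellman_le_bellman_dr: "bellman \<beta> w s \<le> bellman_dr \<beta> d w s"
  unfolding bellman_dr_def by (rule bellman_le_qval)

lemma bellman_attained: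
  obtains a where "bellman \<beta> w s = qval \<beta> w s a"
  unfolding bellman_def by (rule Min_range_attained)

lemma qval_mono: "(\<And>s. s \<in> states \<Longrightarrow> w s \<le> w' s) \<Longrightarrow> qval \<beta> w s a \<le> qval \<beta> w' s a"
  unfolding qval_def by (intro sum_mono mult_left_mono) simp_all

lemma bellman_mono: "(\<And>s. s \<in> states \<Longrightarrow> w s \<le> w' s) \<Longrightarrow> bellman \<beta> w s \<le> bellman \<beta> w' s"
  by (metis bellman_attained bellman_le_qval qval_mono order_trans)

lemma bellman_dr_mono: "(\<And>s. s \<in> states \<Longrightarrow> w s \<le> w' s) \<Longrightarrow> bellman_dr \<beta> d w s \<le> bellman_dr \<beta> d w' s"
  unfolding bellman_dr_def by (rule qval_mono)

lemma qval_nonneg: "(\<And>s. s \<in> states \<Longrightarrow> 0 \<le> w s) \<Longrightarrow> 0 \<le> qval \<beta> w s a"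
  unfolding qval_def by (intro sum_nonneg mult_nonneg_nonneg) simp_all

lemma bellman_nonneg: "(\<And>s. s \<in> states \<Longrightarrow> 0 \<le> w s) \<Longrightarrow> 0 \<le> bellman \<beta> w s"
  by (metis bellman_attained qval_nonneg)

lemma qval_sink: "qval \<beta> w sink a = w sink"
  unfolding qval_def by (simp add: mult.assoc sum_pmf_K_sink r_sink)

lemma bellman_sink: "bellman \<beta> w sink = w sink"
  by (metis bellman_attained qval_sink)

lemma bellman_dr_iter_sink: "(bellman_dr \<beta> d ^^ n) w sink = w sink"
  by (induction n) (simp_all add: bellman_dr_def qval_sink)

lemma bellman_dr_iter_add_scale:
  "(bellman_dr \<beta> d ^^ n) (\<lambda>s. f s + c * g s) = (\<lambda>s. (bellman_dr \<beta> d ^^ n) f s + c * (bellman_dr \<beta> d ^^ n) g s)"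
proof (induction n)
  case (Suc n)
  then show ?case
    by (simp add: bellman_dr_def qval_def sum.distrib sum_distrib_left algebra_simps)
qed simp

lemma bellman_dr_iter_diff:
  "(bellman_dr \<beta> d ^^ n) (\<lambda>s. f s - g s) = (\<lambda>s. (bellman_dr \<beta> d ^^ n) f s - (bellman_dr \<beta> d ^^ n) g s)"
  using bellman_dr_iter_add_scale[where c = "-1"] by simp

lemma qval_tendsto:
  "(\<And>s'. s' \<in> states \<Longrightarrow> (\<lambda>n. X n s') \<longlonglongrightarrow> w s') \<Longrightarrow> (\<lambda>n. qval \<beta> (X n) s a) \<longlonglongrightarrow> qval \<beta> w s a"
  unfolding qval_def by (intro tendsto_sum tendsto_mult_left) simp

lemma expectation_traj_Suc:
  assumes \<nu>: "set_pmf \<nu> \<subseteq> states"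
  shows "measure_pmf.expectation (traj K \<pi> \<nu> (Suc n)) (\<lambda>hs. exp (- \<beta> * traj_return r hs) * w (snd hs))
    = measure_pmf.expectation (traj K \<pi> \<nu> n) (\<lambda>(h, s). exp (- \<beta> * traj_return r (h, s))
        * measure_pmf.expectation (\<pi> h s) (qval \<beta> w s))"
proof -
  define T where "T = traj K \<pi> \<nu> n"
  have fin: "finite (set_pmf T)" and T_states: "\<And>h s. (h, s) \<in> set_pmf T \<Longrightarrow> s \<in> states"
    using set_pmf_traj[OF \<nu>, of \<pi> n] unfolding T_def by auto
  have step: "measure_pmf.expectation (K s a) (\<lambda>s'. exp (- \<beta> * traj_return r (h @ [(s, a)], s')) * w s')
      = exp (- \<beta> * traj_return r (h, s)) * qval \<beta> w s a" if "s \<in> states" for h s a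
    using set_pmf_K[OF that]
    by (simp add: expectation_pmf_eq_sum[of states] qval_def traj_return_snoc sum_distrib_left
        algebra_simps flip: exp_add)
  have "measure_pmf.expectation (traj K \<pi> \<nu> (Suc n)) (\<lambda>hs. exp (- \<beta> * traj_return r hs) * w (snd hs))
      = measure_pmf.expectation T (\<lambda>(h, s). measure_pmf.expectation (\<pi> h s) (\<lambda>a.
          measure_pmf.expectation (K s a) (\<lambda>s'. exp (- \<beta> * traj_return r (h @ [(s, a)], s')) * w s')))"
    using fin T_states unfolding T_def traj.simps
    by (subst expectation_bind_pmf_finite)
      (auto simp: set_bind_pmf finite_set_pmf_K expectation_bind_pmf_finite split: prod.splits
        intro!: expectation_pmf_cong finite_UN_I finite_imageI)
  also have "\<dots> = measure_pmf.expectation T (\<lambda>(h, s). exp (- \<beta> * traj_return r (h, s))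
        * measure_pmf.expectation (\<pi> h s) (qval \<beta> w s))"
  proof (rule expectation_pmf_cong, clarify)
    fix h s assume "(h, s) \<in> set_pmf T"
    then have "s \<in> states" by (rule T_states)
    then show "measure_pmf.expectation (\<pi> h s) (\<lambda>a. measure_pmf.expectation (K s a)
          (\<lambda>s'. exp (- \<beta> * traj_return r (h @ [(s, a)], s')) * w s'))
        = exp (- \<beta> * traj_return r (h, s)) * measure_pmf.expectation (\<pi> h s) (qval \<beta> w s)"
      by (simp only: step) simp
  qed
  finally show ?thesis unfolding T_def .
qed

lemma bellman_iter_le_expectation_traj:
  assumes \<nu>: "set_pmf \<nu> \<subseteq> states"
  shows "measure_pmf.expectation \<nu> ((bellman \<beta> ^^ (n + m)) w)
    \<le> measure_pmf.expectation (traj K \<pi> \<nu> n)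
        (\<lambda>hs. exp (- \<beta> * traj_return r hs) * (bellman \<beta> ^^ m) w (snd hs))"
proof (induction n arbitrary: m)
  case 0
  then show ?case by (simp add: traj_return_Nil)
next
  case (Suc n)
  have fin: "finite (set_pmf (traj K \<pi> \<nu> n))" using set_pmf_traj[OF \<nu>] by blast
  have "measure_pmf.expectation \<nu> ((bellman \<beta> ^^ (Suc n + m)) w)
      \<le> measure_pmf.expectation (traj K \<pi> \<nu> n)
        (\<lambda>hs. exp (- \<beta> * traj_return r hs) * (bellman \<beta> ^^ Suc m) w (snd hs))"
    using Suc.IH[of "Suc m"] by simp
  also have "\<dots> \<le> measure_pmf.expectation (traj K \<pi> \<nu> n) (\<lambda>(h, s).
      exp (- \<beta> * traj_return r (h, s)) * measure_pmf.expectation (\<pi> h s) (qval \<beta> ((bellman \<beta> ^^ m) w) s))"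
  proof (rule expectation_pmf_mono[OF fin], clarify)
    fix h s
    have "(bellman \<beta> ^^ Suc m) w s \<le> measure_pmf.expectation (\<pi> h s) (qval \<beta> ((bellman \<beta> ^^ m) w) s)"
      using expectation_pmf_mono[of "\<pi> h s" "\<lambda>_. (bellman \<beta> ^^ Suc m) w s"]
      by (simp add: bellman_le_qval)
    then show "exp (- \<beta> * traj_return r (h, s)) * (bellman \<beta> ^^ Suc m) w (snd (h, s))
      \<le> exp (- \<beta> * traj_return r (h, s)) * measure_pmf.expectation (\<pi> h s) (qval \<beta> ((bellman \<beta> ^^ m) w) s)"
      by simp
  qed
  also have "\<dots> = measure_pmf.expectation (traj K \<pi> \<nu> (Suc n))
      (\<lambda>hs. exp (- \<beta> * traj_return r hs) * (bellman \<beta> ^^ m) w (snd hs))"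
    by (rule expectation_traj_Suc[OF \<nu>, symmetric])
  finally show ?case .
qed

lemma expectation_traj_sd_policy:
  assumes \<nu>: "set_pmf \<nu> \<subseteq> states"
  shows "measure_pmf.expectation (traj K (sd_policy d) \<nu> n)
        (\<lambda>hs. exp (- \<beta> * traj_return r hs) * (bellman_dr \<beta> d ^^ m) w (snd hs))
    = measure_pmf.expectation \<nu> ((bellman_dr \<beta> d ^^ (n + m)) w)"
proof (induction n arbitrary: m)
  case 0
  then show ?case by (simp add: traj_return_Nil)
next
  case (Suc n)
  have "measure_pmf.expectation (traj K (sd_policy d) \<nu> (Suc n))
        (\<lambda>hs. exp (- \<beta> * traj_return r hs) * (bellman_dr \<beta> d ^^ m) w (snd hs))
      = measure_pmf.expectation (traj K (sd_policy d) \<nu> n)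
        (\<lambda>hs. exp (- \<beta> * traj_return r hs) * (bellman_dr \<beta> d ^^ Suc m) w (snd hs))"
    unfolding expectation_traj_Suc[OF \<nu>] by (simp add: sd_policy_def bellman_dr_def case_prod_unfold)
  also have "\<dots> = measure_pmf.expectation \<nu> ((bellman_dr \<beta> d ^^ (n + Suc m)) w)"
    by (rule Suc.IH)
  finally show ?case by simp
qed

definition init_mean :: "(nat \<Rightarrow> real) \<Rightarrow> real" where
  "init_mean f = (\<Sum>s\<in>tstates. pmf \<mu> s * f s)"

lemma expectation_\<mu>: "measure_pmf.expectation \<mu> f = init_mean f"
  unfolding init_mean_def by (rule expectation_pmf_eq_sum) (simp_all add: set_pmf_\<mu>)

lemma init_mean_mono: "(\<And>s. s \<in> tstates \<Longrightarrow> f s \<le> g s) \<Longrightarrow> init_mean f \<le> init_mean g"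
  unfolding init_mean_def by (intro sum_mono mult_left_mono) simp_all

lemma init_mean_const: "init_mean (\<lambda>_. c) = c"
proof -
  have "(\<Sum>s\<in>tstates. pmf \<mu> s) = 1"
    by (rule sum_pmf_eq_1) (simp_all add: set_pmf_\<mu>)
  then show ?thesis by (simp add: init_mean_def flip: sum_distrib_right)
qed

lemma init_mean_linear: "init_mean (\<lambda>s. f s + c * g s) = init_mean f + c * init_mean g"
  unfolding init_mean_def by (simp add: algebra_simps sum.distrib sum_distrib_left)

lemma init_mean_tendsto:
  "(\<And>s. s \<in> tstates \<Longrightarrow> (\<lambda>n. X n s) \<longlonglongrightarrow> f s) \<Longrightarrow> (\<lambda>n. init_mean (X n)) \<longlonglongrightarrow> init_mean f"
  unfolding init_mean_def by (intro tendsto_sum tendsto_mult_left) simp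

lemma pmf_\<mu>_le_init_mean:
  "s \<in> tstates \<Longrightarrow> (\<And>s. s \<in> tstates \<Longrightarrow> 0 \<le> f s) \<Longrightarrow> pmf \<mu> s * f s \<le> init_mean f"
  unfolding init_mean_def by (rule member_le_sum) simp_all

definition laplace :: "'a policy \<Rightarrow> nat \<Rightarrow> real \<Rightarrow> real" where
  "laplace \<pi> t \<beta> = measure_pmf.expectation (return_dist K r \<pi> \<mu> t) (\<lambda>x. exp (- \<beta> * x))"

lemma set_pmf_\<mu>_states: "set_pmf \<mu> \<subseteq> states"
  by (auto simp: set_pmf_\<mu>)

lemma finite_set_pmf_return_dist: "finite (set_pmf (return_dist K r \<pi> \<mu> t))"
  using set_pmf_traj[OF set_pmf_\<mu>_states] by (simp add: return_dist_def del: traj.simps)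

lemma laplace_pos: "0 < laplace \<pi> t \<beta>"
  unfolding laplace_def by (rule expectation_exp_pos[OF finite_set_pmf_return_dist])

lemma init_mean_bellman_iter_le_laplace: "init_mean ((bellman \<beta> ^^ Suc t) (\<lambda>_. 1)) \<le> laplace \<pi> t \<beta>"
  using bellman_iter_le_expectation_traj[OF set_pmf_\<mu>_states, where n="Suc t" and m=0 and w="\<lambda>_. 1"]
  by (simp add: laplace_def return_dist_def expectation_\<mu> del: traj.simps)

lemma laplace_sd_policy: "laplace (sd_policy d) t \<beta> = init_mean ((bellman_dr \<beta> d ^^ Suc t) (\<lambda>_. 1))"
  using expectation_traj_sd_policy[OF set_pmf_\<mu>_states, where n="Suc t" and m=0 and w="\<lambda>_. 1"]
  by (simp add: laplace_def return_dist_def expectation_\<mu> del: traj.simps)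

section \<open>Leaving the transient states\<close>

definition stay_step :: "(nat \<Rightarrow> real) \<Rightarrow> nat \<Rightarrow> real" where
  "stay_step w s = Max (range (\<lambda>a. \<Sum>s'\<in>states. pmf (K s a) s' * w s'))"

definition tstates_ind :: "nat \<Rightarrow> real" where
  "tstates_ind s = (if s \<in> tstates then 1 else 0)"

text \<open>stay_prob n s is the largest probability, over all policies, of still being in a transient
  state after n steps from s.\<close>
definition stay_prob :: "nat \<Rightarrow> nat \<Rightarrow> real" where
  "stay_prob n = (stay_step ^^ n) tstates_ind"

lemma stay_step_ge: "(\<Sum>s'\<in>states. pmf (K s a) s' * w s') \<le> stay_step w s"
  unfolding stay_step_def by (rule Max_ge) simp_all

lemma stay_step_attained:
  obtains a where "stay_step w s = (\<Sum>s'\<in>states. pmf (K s a) s' * w s')"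
  unfolding stay_step_def by (rule Max_range_attained)

lemma stay_step_mono:
  assumes "\<And>s. s \<in> states \<Longrightarrow> w s \<le> w' s"
  shows "stay_step w s \<le> stay_step w' s"
proof -
  obtain a where a: "stay_step w s = (\<Sum>s'\<in>states. pmf (K s a) s' * w s')"
    by (rule stay_step_attained)
  also have "\<dots> \<le> (\<Sum>s'\<in>states. pmf (K s a) s' * w' s')"
    using assms by (intro sum_mono mult_left_mono) simp_all
  also have "\<dots> \<le> stay_step w' s" by (rule stay_step_ge)
  finally show ?thesis .
qed

lemma stay_step_sink: "stay_step w sink = w sink"
  by (simp add: stay_step_def sum_pmf_K_sink)

lemma stay_step_scale:
  assumes "0 \<le> c"
  shows "stay_step (\<lambda>s. c * w s) = (\<lambda>s. c * stay_step w s)"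
proof
  fix s
  have "mono ((*) c)" using assms by (auto intro: monoI mult_left_mono)
  moreover have "range (\<lambda>a. \<Sum>s'\<in>states. pmf (K s a) s' * (c * w s'))
      = (*) c ` range (\<lambda>a. \<Sum>s'\<in>states. pmf (K s a) s' * w s')"
    by (auto simp: sum_distrib_left algebra_simps image_iff)
  ultimately show "stay_step (\<lambda>s. c * w s) s = c * stay_step w s"
    unfolding stay_step_def by (simp add: mono_Max_commute)
qed

lemma stay_step_iter_scale:
  "0 \<le> c \<Longrightarrow> (stay_step ^^ n) (\<lambda>s. c * w s) = (\<lambda>s. c * (stay_step ^^ n) w s)"
  by (induction n) (simp_all add: stay_step_scale)

lemma stay_prob_Suc: "stay_prob (Suc n) = stay_step (stay_prob n)"
  by (simp add: stay_prob_def)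

lemma stay_prob_sink: "stay_prob n sink = 0"
  by (induction n) (simp_all add: stay_prob_def tstates_ind_def stay_step_sink)

lemma stay_prob_bounds: "s \<in> states \<Longrightarrow> 0 \<le> stay_prob n s \<and> stay_prob n s \<le> 1"
proof (induction n arbitrary: s)
  case 0
  then show ?case by (simp add: stay_prob_def tstates_ind_def)
next
  case (Suc n)
  obtain a where a: "stay_prob (Suc n) s = (\<Sum>s'\<in>states. pmf (K s a) s' * stay_prob n s')"
    using stay_step_attained stay_prob_Suc by metis
  have "(\<Sum>s'\<in>states. pmf (K s a) s' * stay_prob n s') \<le> (\<Sum>s'\<in>states. pmf (K s a) s')"
    using Suc.IH by (intro sum_mono mult_left_le) simp_all
  moreover have "0 \<le> (\<Sum>s'\<in>states. pmf (K s a) s' * stay_prob n s')"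
    using Suc.IH by (intro sum_nonneg mult_nonneg_nonneg) simp_all
  ultimately show ?case
    using sum_pmf_K[OF Suc.prems] by (simp add: a)
qed

lemma stay_prob_Suc_le:
  assumes "s \<in> states"
  shows "stay_prob (Suc n) s \<le> stay_prob n s"
proof -
  have le: "stay_step tstates_ind s \<le> tstates_ind s" if "s \<in> states" for s
    using that stay_prob_bounds[OF that, of 1] stay_step_sink[of tstates_ind]
    by (cases "s = sink") (simp_all add: stay_prob_def tstates_ind_def)
  have "(stay_step ^^ n) (stay_step tstates_ind) s \<le> (stay_step ^^ n) tstates_ind s"
    by (rule funpow_mono_on[where F = stay_step, OF stay_step_mono le assms])
  then show ?thesis by (simp add: stay_prob_def funpow_Suc_right del: funpow.simps)
qed

definition sure_stay :: "nat \<Rightarrow> nat set" where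
  "sure_stay n = {s \<in> states. stay_prob n s = 1}"

lemma sure_stay_subset_tstates: "sure_stay n \<subseteq> tstates"
  using stay_prob_sink unfolding sure_stay_def by (auto simp: le_Suc_eq)

lemma decseq_sure_stay: "decseq sure_stay"
  unfolding decseq_Suc_iff
proof
  fix n
  show "sure_stay (Suc n) \<subseteq> sure_stay n"
  proof
    fix s assume "s \<in> sure_stay (Suc n)"
    then have s: "s \<in> states" and "stay_prob (Suc n) s = 1" unfolding sure_stay_def by auto
    then have "stay_prob n s = 1" using stay_prob_Suc_le[OF s, of n] stay_prob_bounds[OF s, of n] by simp
    then show "s \<in> sure_stay n" using s unfolding sure_stay_def by simp
  qed
qed

lemma sure_stay_Suc_closed:
  assumes "s \<in> sure_stay (Suc n)"
  obtains a where "set_pmf (K s a) \<subseteq> sure_stay n"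
proof -
  have s: "s \<in> states" and one: "stay_prob (Suc n) s = 1"
    using assms unfolding sure_stay_def by auto
  obtain a where a: "stay_prob (Suc n) s = (\<Sum>s'\<in>states. pmf (K s a) s' * stay_prob n s')"
    using stay_step_attained stay_prob_Suc by metis
  have "(\<Sum>s'\<in>states. pmf (K s a) s' * (1 - stay_prob n s')) = 0"
    using sum_pmf_K[OF s, of a] a one by (simp add: algebra_simps sum_subtractf)
  then have "\<forall>s'\<in>states. pmf (K s a) s' * (1 - stay_prob n s') = 0"
    using stay_prob_bounds by (subst (asm) sum_nonneg_eq_0_iff) auto
  then have "set_pmf (K s a) \<subseteq> sure_stay n"
    using set_pmf_K[OF s] by (auto simp: sure_stay_def set_pmf_eq subset_iff)
  then show thesis by (rule that)
qed

lemma closed_subset_tstates_empty: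
  assumes G: "G \<subseteq> tstates" and closed: "\<forall>s\<in>G. \<exists>a. set_pmf (K s a) \<subseteq> G"
  shows "G = {}"
proof (rule ccontr)
  assume "G \<noteq> {}"
  then obtain s0 where s0: "s0 \<in> G" by blast
  define d where "d s = (SOME a. set_pmf (K s a) \<subseteq> G)" for s
  have d: "set_pmf (K s (d s)) \<subseteq> G" if "s \<in> G" for s
    unfolding d_def using closed that by (metis someI_ex)
  define P where "P t s' = measure_pmf.prob (traj K (sd_policy d) (return_pmf s0) t) {hs. snd hs = s'}" for t s'
  have in_G: "\<forall>hs\<in>set_pmf (traj K (sd_policy d) (return_pmf s0) t). snd hs \<in> G" for t
    by (induction t) (use s0 d in \<open>fastforce simp: set_bind_pmf sd_policy_def\<close>)+
  have finG: "finite G" using G finite_subset by blast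
  have "(\<Sum>s'\<in>G. P t s') = 1" for t
  proof -
    have "(\<Sum>s'\<in>G. P t s') = (\<Sum>s'\<in>G. pmf (map_pmf snd (traj K (sd_policy d) (return_pmf s0) t)) s')"
      unfolding P_def by (rule sum.cong) (auto simp: pmf_map vimage_def)
    also have "\<dots> = 1" by (rule sum_pmf_eq_1[OF finG]) (use in_G in auto)
    finally show ?thesis .
  qed
  moreover have "summable (\<lambda>t. \<Sum>s'\<in>G. P t s')"
    using transient G s0 unfolding transient_def P_def One_nat_def
    by (intro summable_sum) blast
  ultimately show False by (simp add: summable_const_iff)
qed

lemma stay_prob_S_less_1:
  assumes s: "s \<in> tstates"
  shows "stay_prob S s < 1"
proof (rule ccontr)
  assume "\<not> stay_prob S s < 1"
  then have "s \<in> sure_stay S"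
    using s stay_prob_bounds[of s S] unfolding sure_stay_def by auto
  then have "sure_stay S \<noteq> {}" by blast
  moreover have "card (sure_stay 0) \<le> S"
    using card_mono[OF _ sure_stay_subset_tstates[of 0]] by simp
  ultimately obtain n where n: "n < S" "sure_stay (Suc n) = sure_stay n"
    using decseq_finite_sets_stationary[OF decseq_sure_stay] finite_subset[OF sure_stay_subset_tstates]
    by blast
  have "sure_stay S \<subseteq> sure_stay n"
    using decseq_sure_stay n(1) by (simp add: decseq_def)
  moreover have "sure_stay n = {}"
    by (rule closed_subset_tstates_empty[OF sure_stay_subset_tstates])
      (metis n(2) sure_stay_Suc_closed)
  ultimately show False using \<open>s \<in> sure_stay S\<close> by blast
qed

definition escape_gap :: real where
  "escape_gap = 1 - Max (stay_prob S ` tstates)"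

lemma escape_gap_pos: "0 < escape_gap"
proof -
  have "Max (stay_prob S ` tstates) \<in> stay_prob S ` tstates"
    using tstates_nonempty by (intro Max_in) simp_all
  then show ?thesis unfolding escape_gap_def using stay_prob_S_less_1 by auto
qed

lemma escape_gap_le_1: "escape_gap \<le> 1"
proof -
  obtain s where s: "s \<in> tstates" using tstates_nonempty by blast
  then have "0 \<le> stay_prob S s" using stay_prob_bounds[of s S] by simp
  also have "\<dots> \<le> Max (stay_prob S ` tstates)" using s by (intro Max_ge) simp_all
  finally show ?thesis unfolding escape_gap_def by simp
qed

lemma stay_prob_S_le: "s \<in> states \<Longrightarrow> stay_prob S s \<le> 1 - escape_gap"
  using stay_prob_sink escape_gap_le_1
  by (cases "s = sink") (simp_all add: escape_gap_def le_Suc_eq)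

lemma stay_prob_add_S:
  assumes s: "s \<in> states"
  shows "stay_prob (S + j) s \<le> (1 - escape_gap) * stay_prob j s"
proof -
  have le: "stay_prob S s' \<le> (1 - escape_gap) * tstates_ind s'" if "s' \<in> states" for s'
    using that stay_prob_S_le[OF that] stay_prob_sink
    by (cases "s' = sink") (simp_all add: tstates_ind_def)
  have "stay_prob (S + j) s = (stay_step ^^ j) (stay_prob S) s"
    by (simp add: stay_prob_def funpow_add add.commute[of S j])
  also have "\<dots> \<le> (stay_step ^^ j) (\<lambda>s'. (1 - escape_gap) * tstates_ind s') s"
    by (rule funpow_mono_on[where F = stay_step, OF stay_step_mono le s])
  also have "\<dots> = (1 - escape_gap) * stay_prob j s"
    using escape_gap_le_1 by (simp add: stay_step_iter_scale stay_prob_def)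
  finally show ?thesis .
qed

text \<open>Every S steps the probability of staying in the transient states shrinks by the factor
  1 - escape_gap.\<close>
lemma sum_stay_prob_le:
  assumes s: "s \<in> states"
  shows "(\<Sum>k<n. stay_prob k s) \<le> S / escape_gap"
proof -
  have nonneg: "0 \<le> stay_prob k s" for k using stay_prob_bounds[OF s] by simp
  have "(\<Sum>k<S. stay_prob k s) \<le> (\<Sum>k<S. 1)"
    using stay_prob_bounds[OF s] by (intro sum_mono) simp
  moreover have "(\<Sum>j<n. stay_prob (S + j) s) \<le> (1 - escape_gap) * (\<Sum>k<S + n. stay_prob k s)"
  proof -
    have "(\<Sum>j<n. stay_prob (S + j) s) \<le> (1 - escape_gap) * (\<Sum>j<n. stay_prob j s)"
      unfolding sum_distrib_left by (intro sum_mono stay_prob_add_S[OF s])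
    also have "\<dots> \<le> (1 - escape_gap) * (\<Sum>k<S + n. stay_prob k s)"
      using escape_gap_le_1 nonneg by (intro mult_left_mono sum_mono2) simp_all
    finally show ?thesis .
  qed
  moreover have "(\<Sum>k<S + n. stay_prob k s) = (\<Sum>k<S. stay_prob k s) + (\<Sum>j<n. stay_prob (S + j) s)"
    by (induction n) (simp_all add: add.assoc)
  ultimately have "escape_gap * (\<Sum>k<S + n. stay_prob k s) \<le> S"
    by (simp add: algebra_simps)
  then have "(\<Sum>k<S + n. stay_prob k s) \<le> S / escape_gap"
    using escape_gap_pos by (simp add: field_simps)
  moreover have "(\<Sum>k<n. stay_prob k s) \<le> (\<Sum>k<S + n. stay_prob k s)"
    using nonneg by (intro sum_mono2) simp_all
  ultimately show ?thesis by linarith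
qed

definition rmax :: real where
  "rmax = Max ((\<lambda>(s, a, s'). \<bar>r s a s'\<bar>) ` (states \<times> UNIV \<times> states))"

lemma abs_r_le_rmax: "s \<in> states \<Longrightarrow> s' \<in> states \<Longrightarrow> \<bar>r s a s'\<bar> \<le> rmax"
  unfolding rmax_def by (rule Max_ge) (auto intro!: image_eqI[where x = "(s, a, s')"])

lemma rmax_nonneg: "0 \<le> rmax"
  using abs_r_le_rmax[of sink sink] by fastforce

lemma expected_reward_le:
  assumes s: "s \<in> states"
  shows "(\<Sum>s'\<in>states. pmf (K s a) s' * r s a s') \<le> rmax * tstates_ind s"
proof (cases "s = sink")
  case True
  then show ?thesis by (simp add: sum_pmf_K_sink r_sink tstates_ind_def)
next
  case False
  have "(\<Sum>s'\<in>states. pmf (K s a) s' * r s a s') \<le> (\<Sum>s'\<in>states. pmf (K s a) s' * rmax)"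
    using abs_r_le_rmax[OF s] by (intro sum_mono mult_left_mono) (auto simp: abs_le_iff)
  also have "\<dots> = rmax" using sum_pmf_K[OF s] by (simp flip: sum_distrib_right)
  finally show ?thesis using s False by (simp add: tstates_ind_def)
qed

text \<open>Jensen's inequality pushes the risk-neutral bound on the accumulated reward through the
  exponential Bellman operator.\<close>
lemma exp_sum_stay_prob_le_bellman_iter:
  assumes \<beta>: "0 \<le> \<beta>"
  shows "s \<in> states \<Longrightarrow> exp (- \<beta> * (rmax * (\<Sum>k<n. stay_prob k s))) \<le> (bellman \<beta> ^^ n) (\<lambda>_. 1) s"
proof (induction n arbitrary: s)
  case 0
  then show ?case by simp
next
  case (Suc n)
  define Y where "Y s' = rmax * (\<Sum>k<n. stay_prob k s')" for s'
  obtain a where a: "(bellman \<beta> ^^ Suc n) (\<lambda>_. 1) s = qval \<beta> ((bellman \<beta> ^^ n) (\<lambda>_. 1)) s a"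
    by (metis bellman_attained funpow.simps(2) o_apply)
  have "(\<Sum>s'\<in>states. pmf (K s a) s' * Y s') = rmax * (\<Sum>k<n. \<Sum>s'\<in>states. pmf (K s a) s' * stay_prob k s')"
    unfolding Y_def by (simp add: sum_distrib_left algebra_simps flip: sum.swap[of _ states])
  also have "\<dots> \<le> rmax * (\<Sum>k<n. stay_prob (Suc k) s)"
    using rmax_nonneg by (intro mult_left_mono sum_mono) (simp_all add: stay_prob_Suc stay_step_ge)
  finally have Y_le: "(\<Sum>s'\<in>states. pmf (K s a) s' * Y s') \<le> rmax * (\<Sum>k<n. stay_prob (Suc k) s)" .
  have "(\<Sum>s'\<in>states. pmf (K s a) s' * (r s a s' + Y s'))
      = (\<Sum>s'\<in>states. pmf (K s a) s' * r s a s') + (\<Sum>s'\<in>states. pmf (K s a) s' * Y s')"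
    by (simp add: distrib_left sum.distrib)
  also have "\<dots> \<le> rmax * tstates_ind s + rmax * (\<Sum>k<n. stay_prob (Suc k) s)"
    by (rule add_mono[OF expected_reward_le[OF Suc.prems] Y_le])
  also have "\<dots> = rmax * (\<Sum>k<Suc n. stay_prob k s)"
    by (simp only: sum.lessThan_Suc_shift distrib_left) (simp add: stay_prob_def)
  finally have "(\<Sum>s'\<in>states. pmf (K s a) s' * (r s a s' + Y s')) \<le> rmax * (\<Sum>k<Suc n. stay_prob k s)" .
  then have "- \<beta> * (rmax * (\<Sum>k<Suc n. stay_prob k s))
      \<le> - \<beta> * (\<Sum>s'\<in>states. pmf (K s a) s' * (r s a s' + Y s'))"
    using \<beta> by (intro mult_left_mono_neg) simp_all
  also have "\<dots> = (\<Sum>s'\<in>states. pmf (K s a) s' * (- \<beta> * (r s a s' + Y s')))"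
    by (simp add: sum_distrib_left mult_ac)
  finally have "exp (- \<beta> * (rmax * (\<Sum>k<Suc n. stay_prob k s)))
      \<le> exp (\<Sum>s'\<in>states. pmf (K s a) s' * (- \<beta> * (r s a s' + Y s')))"
    by simp
  also have "\<dots> \<le> (\<Sum>s'\<in>states. pmf (K s a) s' * exp (- \<beta> * (r s a s' + Y s')))"
    using sum_pmf_K[OF Suc.prems] by (intro exp_sum_le_sum_exp) auto
  also have "\<dots> \<le> qval \<beta> ((bellman \<beta> ^^ n) (\<lambda>_. 1)) s a"
    unfolding qval_def
  proof (rule sum_mono)
    fix s' assume s': "s' \<in> states"
    have "exp (- \<beta> * (r s a s' + Y s')) = exp (- \<beta> * r s a s') * exp (- \<beta> * Y s')"
      by (simp add: algebra_simps flip: exp_add)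
    also have "\<dots> \<le> exp (- \<beta> * r s a s') * (bellman \<beta> ^^ n) (\<lambda>_. 1) s'"
      using Suc.IH[OF s'] unfolding Y_def by simp
    finally show "pmf (K s a) s' * exp (- \<beta> * (r s a s' + Y s'))
        \<le> pmf (K s a) s' * exp (- \<beta> * r s a s') * (bellman \<beta> ^^ n) (\<lambda>_. 1) s'"
      by (simp add: mult_left_mono mult.assoc)
  qed
  finally show ?case using a by simp
qed

definition value_bound :: real where
  "value_bound = rmax * (S / escape_gap)"

lemma exp_value_bound_le_laplace:
  assumes \<beta>: "0 \<le> \<beta>"
  shows "exp (- \<beta> * value_bound) \<le> laplace \<pi> t \<beta>"
proof -
  have "exp (- \<beta> * value_bound) \<le> (bellman \<beta> ^^ Suc t) (\<lambda>_. 1) s" if "s \<in> tstates" for s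
  proof -
    have s: "s \<in> states" using that by simp
    have "rmax * (\<Sum>k<Suc t. stay_prob k s) \<le> value_bound"
      unfolding value_bound_def by (rule mult_left_mono[OF sum_stay_prob_le[OF s] rmax_nonneg])
    then have "exp (- \<beta> * value_bound) \<le> exp (- \<beta> * (rmax * (\<Sum>k<Suc t. stay_prob k s)))"
      using \<beta> by (simp add: mult_left_mono)
    also have "\<dots> \<le> (bellman \<beta> ^^ Suc t) (\<lambda>_. 1) s"
      by (rule exp_sum_stay_prob_le_bellman_iter[OF \<beta> s])
    finally show ?thesis .
  qed
  then have "init_mean (\<lambda>_. exp (- \<beta> * value_bound)) \<le> init_mean ((bellman \<beta> ^^ Suc t) (\<lambda>_. 1))"
    by (rule init_mean_mono)
  also have "\<dots> \<le> laplace \<pi> t \<beta>" by (rule init_mean_bellman_iter_le_laplace)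
  finally show ?thesis by (simp add: init_mean_const)
qed

section \<open>Exponential values of reaching the sink\<close>

definition sink_ind :: "nat \<Rightarrow> real" where
  "sink_ind s = (if s = sink then 1 else 0)"

text \<open>sink_val \<beta> n s is the least value of E[exp(-\<beta> R_n); s_n = sink] over all policies
  started in s.\<close>
definition sink_val :: "real \<Rightarrow> nat \<Rightarrow> nat \<Rightarrow> real" where
  "sink_val \<beta> n = (bellman \<beta> ^^ n) sink_ind"

lemma sink_val_Suc: "sink_val \<beta> (Suc n) = bellman \<beta> (sink_val \<beta> n)"
  by (simp add: sink_val_def)

lemma sink_val_sink: "sink_val \<beta> n sink = 1"
  by (induction n) (simp_all add: sink_val_def sink_ind_def bellman_sink)

lemma sink_val_nonneg: "s \<in> states \<Longrightarrow> 0 \<le> sink_val \<beta> n s"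
proof (induction n arbitrary: s)
  case 0
  then show ?case by (simp add: sink_val_def sink_ind_def)
next
  case (Suc n)
  show ?case unfolding sink_val_Suc by (rule bellman_nonneg[OF Suc.IH])
qed

lemma sink_val_le_bellman_iter_one: "s \<in> states \<Longrightarrow> sink_val \<beta> n s \<le> (bellman \<beta> ^^ n) (\<lambda>_. 1) s"
  unfolding sink_val_def
  by (rule funpow_mono_on[where A = states and F = "bellman \<beta>", OF bellman_mono])
    (simp_all add: sink_ind_def)

lemma sink_ind_le_bellman: "s \<in> states \<Longrightarrow> sink_ind s \<le> bellman \<beta> sink_ind s"
  using bellman_sink[of \<beta> sink_ind] bellman_nonneg[of sink_ind \<beta> s]
  by (cases "s = sink") (simp_all add: sink_ind_def)

lemma incseq_sink_val:
  assumes s: "s \<in> states"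
  shows "incseq (\<lambda>n. sink_val \<beta> n s)"
proof -
  have "(bellman \<beta> ^^ n) sink_ind s \<le> (bellman \<beta> ^^ n) (bellman \<beta> sink_ind) s" for n
    by (rule funpow_mono_on[where F = "bellman \<beta>", OF bellman_mono sink_ind_le_bellman s])
  then show ?thesis
    by (simp add: incseq_Suc_iff sink_val_def funpow_Suc_right del: funpow.simps)
qed

lemma exp_stay_prob_le_sink_val:
  assumes \<beta>: "0 \<le> \<beta>"
  shows "s \<in> states \<Longrightarrow> exp (- \<beta> * rmax * n) * (1 - stay_prob n s) \<le> sink_val \<beta> n s"
proof (induction n arbitrary: s)
  case 0
  then show ?case by (auto simp: sink_val_def stay_prob_def tstates_ind_def sink_ind_def)
next
  case (Suc n)
  obtain a where a: "sink_val \<beta> (Suc n) s = qval \<beta> (sink_val \<beta> n) s a"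
    unfolding sink_val_Suc by (rule bellman_attained)
  define E where "E = exp (- \<beta> * rmax * n)"
  have "1 - stay_prob (Suc n) s \<le> 1 - (\<Sum>s'\<in>states. pmf (K s a) s' * stay_prob n s')"
    using stay_step_ge[of s a "stay_prob n"] by (simp add: stay_prob_Suc)
  also have "\<dots> = (\<Sum>s'\<in>states. pmf (K s a) s' * (1 - stay_prob n s'))"
    using sum_pmf_K[OF Suc.prems, of a] by (simp add: algebra_simps sum_subtractf)
  finally have "exp (- \<beta> * rmax * Suc n) * (1 - stay_prob (Suc n) s)
      \<le> exp (- \<beta> * rmax * Suc n) * (\<Sum>s'\<in>states. pmf (K s a) s' * (1 - stay_prob n s'))"
    by (rule mult_left_mono) simp
  also have "\<dots> = (\<Sum>s'\<in>states. pmf (K s a) s' * (exp (- \<beta> * rmax) * (E * (1 - stay_prob n s'))))"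
  proof -
    have "exp (- \<beta> * rmax * Suc n) = exp (- \<beta> * rmax) * E"
      unfolding E_def by (simp add: algebra_simps flip: exp_add)
    then show ?thesis by (simp add: sum_distrib_left mult_ac)
  qed
  also have "\<dots> \<le> (\<Sum>s'\<in>states. pmf (K s a) s' * exp (- \<beta> * r s a s') * sink_val \<beta> n s')"
  proof (rule sum_mono)
    fix s' assume s': "s' \<in> states"
    have "exp (- \<beta> * rmax) \<le> exp (- \<beta> * r s a s')"
      using abs_r_le_rmax[OF Suc.prems s', of a] \<beta> by (simp add: mult_left_mono abs_le_iff)
    moreover have "E * (1 - stay_prob n s') \<le> sink_val \<beta> n s'"
      unfolding E_def by (rule Suc.IH[OF s'])
    moreover have "0 \<le> E * (1 - stay_prob n s')"
      unfolding E_def using stay_prob_bounds[OF s'] by simp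
    ultimately show "pmf (K s a) s' * (exp (- \<beta> * rmax) * (E * (1 - stay_prob n s')))
        \<le> pmf (K s a) s' * exp (- \<beta> * r s a s') * sink_val \<beta> n s'"
      by (simp add: mult.assoc mult_left_mono mult_mono)
  qed
  also have "\<dots> = sink_val \<beta> (Suc n) s" unfolding a qval_def ..
  finally show ?case .
qed

definition sink_val_floor :: "real \<Rightarrow> real" where
  "sink_val_floor \<beta> = exp (- \<beta> * rmax * S) * escape_gap"

lemma sink_val_floor_pos: "0 < sink_val_floor \<beta>"
  unfolding sink_val_floor_def using escape_gap_pos by simp

lemma sink_val_floor_le_sink_val:
  assumes "0 \<le> \<beta>" "s \<in> states" "S \<le> n"
  shows "sink_val_floor \<beta> \<le> sink_val \<beta> n s"
proof -
  have "sink_val_floor \<beta> \<le> exp (- \<beta> * rmax * S) * (1 - stay_prob S s)"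
    unfolding sink_val_floor_def using stay_prob_S_le[OF assms(2)] by (intro mult_left_mono) simp_all
  also have "\<dots> \<le> sink_val \<beta> S s" by (rule exp_stay_prob_le_sink_val[OF assms(1,2)])
  also have "\<dots> \<le> sink_val \<beta> n s" using incseq_sink_val[OF assms(2)] assms(3) by (simp add: incseq_def)
  finally show ?thesis .
qed

text \<open>If sink_val_bounded \<beta> fails, the EVaR objective at \<beta> tends to -\<infinity> along every policy,
  so only bounded \<beta> matter and sink_val_lim is used only for them.\<close>
definition sink_val_bounded :: "real \<Rightarrow> bool" where
  "sink_val_bounded \<beta> \<longleftrightarrow> (\<exists>B. \<forall>n. init_mean (sink_val \<beta> n) \<le> B)"

definition sink_val_lim :: "real \<Rightarrow> nat \<Rightarrow> real" where
  "sink_val_lim \<beta> s = lim (\<lambda>n. sink_val \<beta> n s)"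

text \<open>Restricted to the states so that greedy decision rules range over a finite set.\<close>
definition greedy :: "real \<Rightarrow> nat \<Rightarrow> 'a" where
  "greedy \<beta> = restrict (\<lambda>s. SOME a. bellman \<beta> (sink_val_lim \<beta>) s = qval \<beta> (sink_val_lim \<beta>) s a) states"

definition sink_val_greedy :: "real \<Rightarrow> nat \<Rightarrow> nat \<Rightarrow> real" where
  "sink_val_greedy \<beta> n = (bellman_dr \<beta> (greedy \<beta>) ^^ n) sink_ind"

lemma greedy_PiE: "greedy \<beta> \<in> PiE states (\<lambda>_. UNIV)"
  by (simp add: greedy_def)

lemma bellman_dr_greedy: "s \<in> states \<Longrightarrow> bellman_dr \<beta> (greedy \<beta>) (sink_val_lim \<beta>) s = bellman \<beta> (sink_val_lim \<beta>) s"
  unfolding bellman_dr_def greedy_def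
  by (simp, metis (mono_tags, lifting) bellman_attained someI_ex)

lemma sink_val_greedy_sink: "sink_val_greedy \<beta> n sink = 1"
  by (simp add: sink_val_greedy_def bellman_dr_iter_sink sink_ind_def)

context
  fixes \<beta> :: real
  assumes \<beta>_nonneg: "0 \<le> \<beta>" and bounded: "sink_val_bounded \<beta>"
begin

lemma sink_val_bounded_at:
  assumes "s \<in> states"
  shows "\<exists>B. \<forall>n. sink_val \<beta> n s \<le> B"
proof (cases "s = sink")
  case True
  then show ?thesis by (auto simp: sink_val_sink)
next
  case False
  with assms have s: "s \<in> tstates" by auto
  obtain B where B: "\<And>n. init_mean (sink_val \<beta> n) \<le> B" using bounded unfolding sink_val_bounded_def by blast
  have "pmf \<mu> s * sink_val \<beta> n s \<le> B" for n
    using pmf_\<mu>_le_init_mean[OF s, of "sink_val \<beta> n"] sink_val_nonneg B[of n] by force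
  then have "sink_val \<beta> n s \<le> B / pmf \<mu> s" for n
    using pmf_\<mu>_pos[OF s] by (simp add: field_simps)
  then show ?thesis by blast
qed

lemma sink_val_tendsto:
  assumes s: "s \<in> states"
  shows "(\<lambda>n. sink_val \<beta> n s) \<longlonglongrightarrow> sink_val_lim \<beta> s"
proof -
  obtain B where "\<forall>n. sink_val \<beta> n s \<le> B" using sink_val_bounded_at[OF s] by blast
  then obtain L where "(\<lambda>n. sink_val \<beta> n s) \<longlonglongrightarrow> L"
    using incseq_convergent[OF incseq_sink_val[OF s]] by metis
  then show ?thesis unfolding sink_val_lim_def by (simp add: limI)
qed

lemma sink_val_le_sink_val_lim: "s \<in> states \<Longrightarrow> sink_val \<beta> n s \<le> sink_val_lim \<beta> s"
  using incseq_le[OF incseq_sink_val sink_val_tendsto] by blast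

lemma sink_val_lim_sink: "sink_val_lim \<beta> sink = 1"
  unfolding sink_val_lim_def sink_val_sink by simp

lemma sink_val_floor_le_sink_val_lim: "s \<in> states \<Longrightarrow> sink_val_floor \<beta> \<le> sink_val_lim \<beta> s"
  using sink_val_floor_le_sink_val[OF \<beta>_nonneg, of s S] sink_val_le_sink_val_lim[of s S] by simp

lemma init_mean_sink_val_lim_pos: "0 < init_mean (sink_val_lim \<beta>)"
  using init_mean_mono[of "\<lambda>_. sink_val_floor \<beta>" "sink_val_lim \<beta>"] sink_val_floor_le_sink_val_lim sink_val_floor_pos[of \<beta>]
  by (simp add: init_mean_const)

lemma init_mean_sink_val_tendsto: "(\<lambda>n. init_mean (sink_val \<beta> n)) \<longlonglongrightarrow> init_mean (sink_val_lim \<beta>)"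
  by (rule init_mean_tendsto) (simp add: sink_val_tendsto)

text \<open>The error terms are summed over all actions because the minimising action may change
  with n.\<close>
lemma bellman_sink_val_lim_le:
  assumes s: "s \<in> states"
  shows "bellman \<beta> (sink_val_lim \<beta>) s \<le> sink_val_lim \<beta> s"
proof (rule LIMSEQ_le_const)
  define gap where "gap n = (\<Sum>a\<in>UNIV. qval \<beta> (sink_val_lim \<beta>) s a - qval \<beta> (sink_val \<beta> n) s a)" for n
  have "gap \<longlonglongrightarrow> (\<Sum>a\<in>UNIV. qval \<beta> (sink_val_lim \<beta>) s a - qval \<beta> (sink_val_lim \<beta>) s a)"
    unfolding gap_def by (intro tendsto_sum tendsto_diff tendsto_const qval_tendsto sink_val_tendsto)
  then have "gap \<longlonglongrightarrow> 0" by simp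
  then show "(\<lambda>n. sink_val_lim \<beta> s + gap n) \<longlonglongrightarrow> sink_val_lim \<beta> s"
    using tendsto_add[OF tendsto_const] by fastforce
  show "\<exists>N. \<forall>n\<ge>N. bellman \<beta> (sink_val_lim \<beta>) s \<le> sink_val_lim \<beta> s + gap n"
  proof (intro exI allI impI)
    fix n
    obtain a where a: "sink_val \<beta> (Suc n) s = qval \<beta> (sink_val \<beta> n) s a"
      unfolding sink_val_Suc by (rule bellman_attained)
    have "qval \<beta> (sink_val_lim \<beta>) s a - qval \<beta> (sink_val \<beta> n) s a \<le> gap n"
      unfolding gap_def by (intro member_le_sum) (auto intro!: qval_mono sink_val_le_sink_val_lim)
    then have "qval \<beta> (sink_val_lim \<beta>) s a \<le> sink_val_lim \<beta> s + gap n"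
      using a sink_val_le_sink_val_lim[OF s, of "Suc n"] by linarith
    then show "bellman \<beta> (sink_val_lim \<beta>) s \<le> sink_val_lim \<beta> s + gap n"
      using bellman_le_qval order_trans by blast
  qed
qed

lemma bellman_dr_greedy_iter_sink_val_lim_le:
  "s \<in> states \<Longrightarrow> (bellman_dr \<beta> (greedy \<beta>) ^^ n) (sink_val_lim \<beta>) s \<le> sink_val_lim \<beta> s"
proof (induction n arbitrary: s)
  case (Suc n)
  have "(bellman_dr \<beta> (greedy \<beta>) ^^ Suc n) (sink_val_lim \<beta>) s \<le> bellman_dr \<beta> (greedy \<beta>) (sink_val_lim \<beta>) s"
    unfolding funpow.simps o_apply by (rule bellman_dr_mono[OF Suc.IH])
  also have "\<dots> \<le> sink_val_lim \<beta> s"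
    using bellman_sink_val_lim_le[OF Suc.prems] bellman_dr_greedy[OF Suc.prems] by simp
  finally show ?case .
qed simp

lemma sink_ind_le_sink_val_lim:
  assumes s: "s \<in> states"
  shows "sink_ind s \<le> sink_val_lim \<beta> s"
proof (cases "s = sink")
  case True
  then show ?thesis by (simp add: sink_ind_def sink_val_lim_sink)
next
  case False
  have "0 < sink_val_lim \<beta> s" using sink_val_floor_le_sink_val_lim[OF s] sink_val_floor_pos[of \<beta>] by linarith
  then show ?thesis using False by (simp add: sink_ind_def)
qed

lemma sink_val_greedy_le_sink_val_lim:
  assumes s: "s \<in> states"
  shows "sink_val_greedy \<beta> n s \<le> sink_val_lim \<beta> s"
proof -
  have "sink_val_greedy \<beta> n s \<le> (bellman_dr \<beta> (greedy \<beta>) ^^ n) (sink_val_lim \<beta>) s"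
    unfolding sink_val_greedy_def
    by (rule funpow_mono_on[where F = "bellman_dr \<beta> (greedy \<beta>)", OF bellman_dr_mono sink_ind_le_sink_val_lim s])
  also have "\<dots> \<le> sink_val_lim \<beta> s" by (rule bellman_dr_greedy_iter_sink_val_lim_le[OF s])
  finally show ?thesis .
qed

lemma sink_val_le_sink_val_greedy: "s \<in> states \<Longrightarrow> sink_val \<beta> n s \<le> sink_val_greedy \<beta> n s"
proof (induction n arbitrary: s)
  case (Suc n)
  have "sink_val \<beta> (Suc n) s \<le> bellman \<beta> (sink_val_greedy \<beta> n) s"
    unfolding sink_val_Suc using Suc.IH by (rule bellman_mono)
  also have "\<dots> \<le> sink_val_greedy \<beta> (Suc n) s"
    unfolding sink_val_greedy_def using bellman_le_bellman_dr by simp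
  finally show ?case .
qed (simp add: sink_val_def sink_val_greedy_def)

lemma sink_val_greedy_convergent:
  assumes s: "s \<in> states"
  shows "convergent (\<lambda>n. sink_val_greedy \<beta> n s)"
proof -
  have "sink_ind s' \<le> bellman_dr \<beta> (greedy \<beta>) sink_ind s'" if "s' \<in> states" for s'
    using sink_ind_le_bellman[OF that] bellman_le_bellman_dr order_trans by blast
  then have "sink_val_greedy \<beta> n s \<le> sink_val_greedy \<beta> (Suc n) s" for n
    using funpow_mono_on[where F = "bellman_dr \<beta> (greedy \<beta>)", OF bellman_dr_mono _ s]
    by (simp add: sink_val_greedy_def funpow_Suc_right del: funpow.simps)
  then have "incseq (\<lambda>n. sink_val_greedy \<beta> n s)" by (simp add: incseq_Suc_iff)
  moreover have "\<forall>n. sink_val_greedy \<beta> n s \<le> sink_val_lim \<beta> s" using sink_val_greedy_le_sink_val_lim[OF s] by blast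
  ultimately obtain L where "(\<lambda>n. sink_val_greedy \<beta> n s) \<longlonglongrightarrow> L"
    using incseq_convergent by metis
  then show ?thesis by (rule convergentI)
qed

text \<open>From S steps on, the greedy policy has reached the sink with probability at least
  sink_val_floor, so the time it spends in the transient states is controlled by the increments of
  sink_val_greedy.\<close>
lemma bellman_dr_greedy_iter_one_le:
  assumes s: "s \<in> states"
  shows "(bellman_dr \<beta> (greedy \<beta>) ^^ n) (\<lambda>_. 1) s
    \<le> sink_val_lim \<beta> s + 1 / sink_val_floor \<beta> * (sink_val_greedy \<beta> (n + S) s - sink_val_greedy \<beta> n s)"
proof -
  let ?T = "bellman_dr \<beta> (greedy \<beta>) ^^ n"
  have one_le: "1 \<le> sink_val_lim \<beta> s' + 1 / sink_val_floor \<beta> * (sink_val_greedy \<beta> S s' - sink_ind s')" if s': "s' \<in> states" for s'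
  proof (cases "s' = sink")
    case True
    then show ?thesis by (simp add: sink_val_lim_sink sink_val_greedy_sink sink_ind_def)
  next
    case False
    have "sink_val_floor \<beta> \<le> sink_val_greedy \<beta> S s'"
      using sink_val_floor_le_sink_val[OF \<beta>_nonneg s' order.refl] sink_val_le_sink_val_greedy[OF s'] by (rule order_trans)
    then have "1 \<le> 1 / sink_val_floor \<beta> * sink_val_greedy \<beta> S s'"
      using sink_val_floor_pos[of \<beta>] by (simp add: field_simps)
    moreover have "0 \<le> sink_val_lim \<beta> s'"
      using sink_val_floor_le_sink_val_lim[OF s'] sink_val_floor_pos[of \<beta>] by simp
    ultimately show ?thesis using False by (simp add: sink_ind_def)
  qed
  have "?T (\<lambda>_. 1) s \<le> ?T (\<lambda>s'. sink_val_lim \<beta> s' + 1 / sink_val_floor \<beta> * (sink_val_greedy \<beta> S s' - sink_ind s')) s"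
    by (rule funpow_mono_on[where F = "bellman_dr \<beta> (greedy \<beta>)", OF bellman_dr_mono one_le s])
  also have "\<dots> = ?T (sink_val_lim \<beta>) s + 1 / sink_val_floor \<beta> * (?T (sink_val_greedy \<beta> S) s - ?T sink_ind s)"
    by (simp only: bellman_dr_iter_add_scale bellman_dr_iter_diff)
  also have "\<dots> \<le> sink_val_lim \<beta> s + 1 / sink_val_floor \<beta> * (sink_val_greedy \<beta> (n + S) s - sink_val_greedy \<beta> n s)"
    using bellman_dr_greedy_iter_sink_val_lim_le[OF s, of n]
    by (simp add: sink_val_greedy_def funpow_add)
  finally show ?thesis .
qed

lemma laplace_greedy_le:
  obtains \<epsilon> where "\<epsilon> \<longlonglongrightarrow> 0" "\<And>t. laplace (sd_policy (greedy \<beta>)) t \<beta> \<le> init_mean (sink_val_lim \<beta>) + \<epsilon> t"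
proof
  define \<epsilon> where "\<epsilon> t = 1 / sink_val_floor \<beta> * init_mean (\<lambda>s. sink_val_greedy \<beta> (Suc t + S) s - sink_val_greedy \<beta> (Suc t) s)" for t
  have "(\<lambda>t. sink_val_greedy \<beta> (Suc t + S) s - sink_val_greedy \<beta> (Suc t) s) \<longlonglongrightarrow> 0" if "s \<in> tstates" for s
  proof -
    have "s \<in> states" using that by simp
    then obtain L where L: "(\<lambda>n. sink_val_greedy \<beta> n s) \<longlonglongrightarrow> L"
      using sink_val_greedy_convergent unfolding convergent_def by blast
    have "(\<lambda>t. sink_val_greedy \<beta> (Suc t + S) s) \<longlonglongrightarrow> L"
      using LIMSEQ_ignore_initial_segment[OF L, of "Suc S"] by (simp add: add.commute)
    from tendsto_diff[OF this LIMSEQ_Suc[OF L]] show ?thesis by simp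
  qed
  then have "(\<lambda>t. init_mean (\<lambda>s. sink_val_greedy \<beta> (Suc t + S) s - sink_val_greedy \<beta> (Suc t) s)) \<longlonglongrightarrow> init_mean (\<lambda>_. 0)"
    by (rule init_mean_tendsto)
  then show "\<epsilon> \<longlonglongrightarrow> 0"
    unfolding \<epsilon>_def using tendsto_mult_left[of _ 0 _ "1 / sink_val_floor \<beta>"] by (simp add: init_mean_const)
  fix t
  have "laplace (sd_policy (greedy \<beta>)) t \<beta> = init_mean ((bellman_dr \<beta> (greedy \<beta>) ^^ Suc t) (\<lambda>_. 1))"
    by (rule laplace_sd_policy)
  also have "\<dots> \<le> init_mean (\<lambda>s. sink_val_lim \<beta> s + 1 / sink_val_floor \<beta> * (sink_val_greedy \<beta> (Suc t + S) s - sink_val_greedy \<beta> (Suc t) s))"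
    using bellman_dr_greedy_iter_one_le[of _ "Suc t"] by (intro init_mean_mono) simp
  also have "\<dots> = init_mean (sink_val_lim \<beta>) + \<epsilon> t"
    unfolding \<epsilon>_def by (rule init_mean_linear)
  finally show "laplace (sd_policy (greedy \<beta>)) t \<beta> \<le> init_mean (sink_val_lim \<beta>) + \<epsilon> t" .
qed

end

section \<open>The entropic value at risk\<close>

definition evar_obj :: "real \<Rightarrow> real \<Rightarrow> real" where
  "evar_obj \<beta> y = - ln y / \<beta> + ln \<alpha> / \<beta>"

lemma EVaR_return_dist: "EVaR \<alpha> (return_dist K r \<pi> \<mu> t) = (SUP \<beta>\<in>{0<..}. evar_obj \<beta> (laplace \<pi> t \<beta>))"
  by (simp add: EVaR_def evar_obj_def laplace_def)

lemma ln_alpha_neg: "ln \<alpha> < 0"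
  using alpha_pos alpha_less_1 by simp

lemma evar_obj_antimono: "0 < \<beta> \<Longrightarrow> 0 < y \<Longrightarrow> y \<le> y' \<Longrightarrow> evar_obj \<beta> y' \<le> evar_obj \<beta> y"
  unfolding evar_obj_def by (simp add: divide_right_mono)

lemma evar_obj_tendsto: "f \<longlonglongrightarrow> y \<Longrightarrow> 0 < y \<Longrightarrow> (\<lambda>t. evar_obj \<beta> (f t)) \<longlonglongrightarrow> evar_obj \<beta> y"
  unfolding evar_obj_def divide_inverse by (intro tendsto_intros) simp_all

lemma evar_obj_laplace_le: "0 < \<beta> \<Longrightarrow> evar_obj \<beta> (laplace \<pi> t \<beta>) \<le> value_bound + ln \<alpha> / \<beta>"
  using evar_obj_antimono[OF _ exp_gt_zero exp_value_bound_le_laplace, of \<beta> \<beta> \<pi> t]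
  by (simp add: evar_obj_def)

lemma evar_obj_le_EVaR:
  assumes "0 < \<beta>"
  shows "evar_obj \<beta> (laplace \<pi> t \<beta>) \<le> EVaR \<alpha> (return_dist K r \<pi> \<mu> t)"
proof -
  have "evar_obj \<beta>' (laplace \<pi> t \<beta>') \<le> value_bound" if "0 < \<beta>'" for \<beta>'
    using evar_obj_laplace_le[OF that, of \<pi> t] divide_neg_pos[OF ln_alpha_neg that] by linarith
  then have "bdd_above ((\<lambda>\<beta>. evar_obj \<beta> (laplace \<pi> t \<beta>)) ` {0<..})"
    by (intro bdd_aboveI2[where M = value_bound]) simp
  then show ?thesis
    unfolding EVaR_return_dist using assms by (intro cSUP_upper) simp_all
qed

lemma EVaR_le:
  "(\<And>\<beta>. 0 < \<beta> \<Longrightarrow> evar_obj \<beta> (laplace \<pi> t \<beta>) \<le> c) \<Longrightarrow> EVaR \<alpha> (return_dist K r \<pi> \<mu> t) \<le> c"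
  unfolding EVaR_return_dist by (rule cSUP_least) auto

lemma evar_obj_laplace_shift:
  assumes "0 < \<beta>'" "\<beta>' \<le> \<beta>"
  shows "evar_obj \<beta> (laplace \<pi> t \<beta>) \<le> evar_obj \<beta>' (laplace \<pi> t \<beta>') + (ln \<alpha> / \<beta> - ln \<alpha> / \<beta>')"
  using neg_ln_laplace_div_antimono[OF finite_set_pmf_return_dist assms]
  unfolding evar_obj_def laplace_def by simp

lemma eventually_evar_obj_laplace_less:
  assumes \<beta>: "0 < \<beta>" and less: "sink_val_bounded \<beta> \<Longrightarrow> evar_obj \<beta> (init_mean (sink_val_lim \<beta>)) < c"
  shows "\<forall>\<^sub>F t in sequentially. evar_obj \<beta> (laplace \<pi> t \<beta>) < c"
proof -
  have "\<forall>\<^sub>F t in sequentially. 0 < init_mean (sink_val \<beta> (Suc t)) \<and> evar_obj \<beta> (init_mean (sink_val \<beta> (Suc t))) < c"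
  proof (cases "sink_val_bounded \<beta>")
    case True
    have pos: "0 < init_mean (sink_val_lim \<beta>)"
      using init_mean_sink_val_lim_pos[OF _ True] \<beta> by simp
    have lim: "(\<lambda>t. init_mean (sink_val \<beta> (Suc t))) \<longlonglongrightarrow> init_mean (sink_val_lim \<beta>)"
      using LIMSEQ_Suc[OF init_mean_sink_val_tendsto[OF _ True]] \<beta> by simp
    show ?thesis
      using order_tendstoD(1)[OF lim pos] order_tendstoD(2)[OF evar_obj_tendsto[OF lim pos] less[OF True]]
      by (rule eventually_conj)
  next
    case False
    define B where "B = exp (ln \<alpha> - c * \<beta>)"
    obtain n where n: "B < init_mean (sink_val \<beta> n)"
      using False unfolding sink_val_bounded_def by (meson not_le)
    show ?thesis
    proof (rule eventually_sequentiallyI[of n])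
      fix t assume "n \<le> t"
      then have "init_mean (sink_val \<beta> n) \<le> init_mean (sink_val \<beta> (Suc t))"
        using incseq_sink_val by (intro init_mean_mono) (simp add: incseq_def)
      then have y: "B < init_mean (sink_val \<beta> (Suc t))" using n by linarith
      then have "ln \<alpha> - c * \<beta> < ln (init_mean (sink_val \<beta> (Suc t)))"
        unfolding B_def by (metis exp_gt_zero ln_exp ln_less_cancel_iff order.strict_trans)
      then have "(ln \<alpha> - ln (init_mean (sink_val \<beta> (Suc t)))) / \<beta> < c"
        using \<beta> by (simp add: divide_less_eq algebra_simps)
      moreover have "0 < init_mean (sink_val \<beta> (Suc t))"
        using y unfolding B_def by (meson exp_gt_zero less_trans)
      ultimately show "0 < init_mean (sink_val \<beta> (Suc t)) \<and> evar_obj \<beta> (init_mean (sink_val \<beta> (Suc t))) < c"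
        unfolding evar_obj_def by (simp add: diff_divide_distrib)
    qed
  qed
  then show ?thesis
  proof (rule eventually_mono, elim conjE)
    fix t assume pos: "0 < init_mean (sink_val \<beta> (Suc t))"
      and less: "evar_obj \<beta> (init_mean (sink_val \<beta> (Suc t))) < c"
    have "init_mean (sink_val \<beta> (Suc t)) \<le> init_mean ((bellman \<beta> ^^ Suc t) (\<lambda>_. 1))"
      by (intro init_mean_mono sink_val_le_bellman_iter_one) simp
    also have "\<dots> \<le> laplace \<pi> t \<beta>" by (rule init_mean_bellman_iter_le_laplace)
    finally show "evar_obj \<beta> (laplace \<pi> t \<beta>) < c"
      using evar_obj_antimono[OF \<beta> pos] less by (meson le_less_trans)
  qed
qed

text \<open>Only finitely many values of \<beta> matter: small \<beta> are controlled by value_bound, and on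
  the rest a grid with spacing \<eta> in 1/\<beta> loses at most \<kappa>.\<close>
lemma eventually_EVaR_le:
  assumes less: "\<And>\<beta>. 0 < \<beta> \<Longrightarrow> sink_val_bounded \<beta> \<Longrightarrow> evar_obj \<beta> (init_mean (sink_val_lim \<beta>)) < c"
    and \<kappa>: "0 < \<kappa>"
  shows "\<forall>\<^sub>F t in sequentially. EVaR \<alpha> (return_dist K r \<pi> \<mu> t) \<le> c + \<kappa>"
proof -
  define \<eta> where "\<eta> = \<kappa> / - ln \<alpha>"
  have \<eta>: "0 < \<eta>"
    unfolding \<eta>_def by (rule divide_pos_pos[OF \<kappa>]) (use ln_alpha_neg in simp)
  have ln_\<eta>: "ln \<alpha> * \<eta> = - \<kappa>"
    unfolding \<eta>_def using ln_alpha_neg by (simp add: field_simps)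
  define N where "N = nat \<lceil>(value_bound - c) / \<kappa>\<rceil>"
  have "(value_bound - c) / \<kappa> \<le> real N"
    unfolding N_def by (rule real_nat_ceiling_ge)
  then have N: "value_bound - \<kappa> * real N \<le> c"
    using \<kappa> by (simp add: field_simps)
  define grid where "grid i = 1 / (real i * \<eta>)" for i :: nat
  have "\<forall>\<^sub>F t in sequentially. \<forall>i\<in>{1..N}. evar_obj (grid i) (laplace \<pi> t (grid i)) < c"
    using \<eta> unfolding grid_def
    by (intro eventually_ball_finite ballI eventually_evar_obj_laplace_less less) auto
  then show ?thesis
  proof (rule eventually_mono)
    fix t assume on_grid: "\<forall>i\<in>{1..N}. evar_obj (grid i) (laplace \<pi> t (grid i)) < c"
    show "EVaR \<alpha> (return_dist K r \<pi> \<mu> t) \<le> c + \<kappa>"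
    proof (rule EVaR_le)
      fix \<beta> :: real assume \<beta>: "0 < \<beta>"
      show "evar_obj \<beta> (laplace \<pi> t \<beta>) \<le> c + \<kappa>"
      proof (cases "real N * \<eta> \<le> 1 / \<beta>")
        case True
        have "ln \<alpha> / \<beta> = ln \<alpha> * (1 / \<beta>)" by simp
        also have "\<dots> \<le> ln \<alpha> * (real N * \<eta>)"
          using True ln_alpha_neg by (intro mult_left_mono_neg) simp_all
        also have "\<dots> = (ln \<alpha> * \<eta>) * real N" by (simp only: mult_ac)
        finally have "ln \<alpha> / \<beta> \<le> - \<kappa> * real N" by (simp only: ln_\<eta>)
        then show ?thesis using evar_obj_laplace_le[OF \<beta>, of \<pi> t] N \<kappa> by linarith
      next
        case False
        have "0 \<le> 1 / \<beta>" "1 / \<beta> < real N * \<eta>" using False \<beta> by simp_all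
        then obtain i where i: "i \<in> {1..N}" "(real i - 1) * \<eta> \<le> 1 / \<beta>" "1 / \<beta> < real i * \<eta>"
          by (rule real_grid_bracket[OF \<eta>])
        have i_pos: "0 < real i * \<eta>" using i(1) \<eta> by simp
        then have grid_pos: "0 < grid i" unfolding grid_def by simp
        have "1 < real i * \<eta> * \<beta>" using i(3) \<beta> by (simp add: divide_less_eq)
        then have grid_le: "grid i \<le> \<beta>"
          unfolding grid_def using i_pos by (simp add: divide_le_eq mult.commute)
        have "ln \<alpha> / \<beta> - ln \<alpha> / grid i = ln \<alpha> * (1 / \<beta> - real i * \<eta>)"
          unfolding grid_def by (simp add: algebra_simps)
        also have "\<dots> \<le> ln \<alpha> * (- \<eta>)"
          by (rule mult_left_mono_neg) (use i(2) ln_alpha_neg in \<open>simp_all add: algebra_simps\<close>)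
        finally have "ln \<alpha> / \<beta> - ln \<alpha> / grid i \<le> \<kappa>"
          using ln_\<eta> by simp
        moreover have "evar_obj (grid i) (laplace \<pi> t (grid i)) < c"
          using on_grid i(1) by blast
        ultimately show ?thesis
          using evar_obj_laplace_shift[OF grid_pos grid_le, of \<pi> t] by linarith
      qed
    qed
  qed
qed

lemma liminf_EVaR_le:
  assumes "\<And>\<beta>. 0 < \<beta> \<Longrightarrow> sink_val_bounded \<beta> \<Longrightarrow> ereal (evar_obj \<beta> (init_mean (sink_val_lim \<beta>))) \<le> L"
  shows "liminf (\<lambda>t. ereal (EVaR \<alpha> (return_dist K r \<pi> \<mu> t))) \<le> L"
proof (rule ereal_le_real)
  fix z assume Lz: "L \<le> ereal z"
  show "liminf (\<lambda>t. ereal (EVaR \<alpha> (return_dist K r \<pi> \<mu> t))) \<le> ereal z"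
  proof (rule ereal_le_epsilon2)
    fix e :: real assume e: "0 < e"
    have "evar_obj \<beta> (init_mean (sink_val_lim \<beta>)) < z + e / 2" if "0 < \<beta>" "sink_val_bounded \<beta>" for \<beta>
      using order_trans[OF assms[OF that] Lz] e by simp
    then have "\<forall>\<^sub>F t in sequentially. EVaR \<alpha> (return_dist K r \<pi> \<mu> t) \<le> (z + e / 2) + e / 2"
      using e by (intro eventually_EVaR_le) simp_all
    then have "limsup (\<lambda>t. ereal (EVaR \<alpha> (return_dist K r \<pi> \<mu> t))) \<le> ereal (z + e)"
      by (intro Limsup_bounded) (auto elim: eventually_mono)
    then show "liminf (\<lambda>t. ereal (EVaR \<alpha> (return_dist K r \<pi> \<mu> t))) \<le> ereal z + ereal e"
      using Liminf_le_Limsup[of sequentially] by (metis order_trans plus_ereal.simps(1) trivial_limit_sequentially)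
  qed
qed

lemma liminf_EVaR_greedy_ge:
  assumes \<beta>: "0 < \<beta>" and bounded: "sink_val_bounded \<beta>"
  shows "ereal (evar_obj \<beta> (init_mean (sink_val_lim \<beta>)))
    \<le> liminf (\<lambda>t. ereal (EVaR \<alpha> (return_dist K r (sd_policy (greedy \<beta>)) \<mu> t)))"
proof -
  obtain \<epsilon> where \<epsilon>: "\<epsilon> \<longlonglongrightarrow> 0"
    and laplace_le: "\<And>t. laplace (sd_policy (greedy \<beta>)) t \<beta> \<le> init_mean (sink_val_lim \<beta>) + \<epsilon> t"
    using laplace_greedy_le[OF _ bounded] \<beta> by auto
  have pos: "0 < init_mean (sink_val_lim \<beta>)"
    using init_mean_sink_val_lim_pos[OF _ bounded] \<beta> by simp
  have "(\<lambda>t. init_mean (sink_val_lim \<beta>) + \<epsilon> t) \<longlonglongrightarrow> init_mean (sink_val_lim \<beta>)"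
    using tendsto_add[OF tendsto_const \<epsilon>] by simp
  then have "(\<lambda>t. ereal (evar_obj \<beta> (init_mean (sink_val_lim \<beta>) + \<epsilon> t))) \<longlonglongrightarrow> ereal (evar_obj \<beta> (init_mean (sink_val_lim \<beta>)))"
    using pos by (intro tendsto_ereal evar_obj_tendsto)
  then have "ereal (evar_obj \<beta> (init_mean (sink_val_lim \<beta>)))
      = liminf (\<lambda>t. ereal (evar_obj \<beta> (init_mean (sink_val_lim \<beta>) + \<epsilon> t)))"
    by (rule lim_imp_Liminf[OF trivial_limit_sequentially, symmetric])
  also have "\<dots> \<le> liminf (\<lambda>t. ereal (EVaR \<alpha> (return_dist K r (sd_policy (greedy \<beta>)) \<mu> t)))"
  proof (intro Liminf_mono always_eventually allI)
    fix t
    have "evar_obj \<beta> (init_mean (sink_val_lim \<beta>) + \<epsilon> t) \<le> evar_obj \<beta> (laplace (sd_policy (greedy \<beta>)) t \<beta>)"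
      by (rule evar_obj_antimono[OF \<beta> laplace_pos laplace_le])
    also have "\<dots> \<le> EVaR \<alpha> (return_dist K r (sd_policy (greedy \<beta>)) \<mu> t)"
      by (rule evar_obj_le_EVaR[OF \<beta>])
    finally show "ereal (evar_obj \<beta> (init_mean (sink_val_lim \<beta>) + \<epsilon> t))
        \<le> ereal (EVaR \<alpha> (return_dist K r (sd_policy (greedy \<beta>)) \<mu> t))" by simp
  qed
  finally show ?thesis .
qed

theorem exists_optimal_sd_policy:
  "\<exists>d :: nat \<Rightarrow> 'a. liminf (\<lambda>t. ereal (EVaR \<alpha> (return_dist K r (sd_policy d) \<mu> t)))
     = (SUP \<pi> :: 'a policy. liminf (\<lambda>t. ereal (EVaR \<alpha> (return_dist K r \<pi> \<mu> t))))"
proof -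
  define lim_EVaR where "lim_EVaR \<pi> = liminf (\<lambda>t. ereal (EVaR \<alpha> (return_dist K r \<pi> \<mu> t)))" for \<pi>
  define D where "D = PiE states (\<lambda>_. UNIV :: 'a set)"
  have "finite D" "D \<noteq> {}"
    unfolding D_def using greedy_PiE by (auto intro: finite_PiE)
  then have "Max ((\<lambda>d. lim_EVaR (sd_policy d)) ` D) \<in> (\<lambda>d. lim_EVaR (sd_policy d)) ` D"
    by (intro Max_in) simp_all
  then obtain d where d: "d \<in> D" "Max ((\<lambda>d. lim_EVaR (sd_policy d)) ` D) = lim_EVaR (sd_policy d)"
    by blast
  have "lim_EVaR \<pi> \<le> lim_EVaR (sd_policy d)" for \<pi>
    unfolding lim_EVaR_def
  proof (rule liminf_EVaR_le)
    fix \<beta> :: real assume "0 < \<beta>" "sink_val_bounded \<beta>"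
    then have "ereal (evar_obj \<beta> (init_mean (sink_val_lim \<beta>))) \<le> lim_EVaR (sd_policy (greedy \<beta>))"
      unfolding lim_EVaR_def by (rule liminf_EVaR_greedy_ge)
    also have "\<dots> \<le> lim_EVaR (sd_policy d)"
      unfolding d(2)[symmetric] using \<open>finite D\<close> greedy_PiE by (intro Max_ge) (auto simp: D_def)
    finally show "ereal (evar_obj \<beta> (init_mean (sink_val_lim \<beta>))) \<le> liminf (\<lambda>t. ereal (EVaR \<alpha> (return_dist K r (sd_policy d) \<mu> t)))"
      unfolding lim_EVaR_def .
  qed
  then have "lim_EVaR (sd_policy d) = (SUP \<pi>. lim_EVaR \<pi>)"
    by (intro antisym SUP_upper SUP_least) simp_all
  then show ?thesis unfolding lim_EVaR_def by blast
qed

end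

theorem corollary3:
  fixes S :: nat
    and K :: "nat \<Rightarrow> 'a::finite \<Rightarrow> nat pmf"
    and r :: "nat \<Rightarrow> 'a \<Rightarrow> nat \<Rightarrow> real"
    and \<mu> :: "nat pmf"
    and \<alpha> :: real
  assumes "0 < \<alpha>" and "\<alpha> < 1"
    and "sink_mdp S K r"
    and "transient S K"
    and "set_pmf \<mu> = {1..S}"
  shows "\<exists>d :: nat \<Rightarrow> 'a.
           liminf (\<lambda>t. ereal (EVaR \<alpha> (return_dist K r (sd_policy d) \<mu> t)))
         = (SUP \<pi> :: 'a policy. liminf (\<lambda>t. ereal (EVaR \<alpha> (return_dist K r \<pi> \<mu> t))))"
proof -
  interpret transient_sink_mdp S K r \<mu> \<alpha>
    using assms by unfold_locales
  show ?thesis by (rule exists_optimal_sd_policy)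
qed

end
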